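(* Let $\Xi:\mathbf R^n\to\mathbf R^n$ be continuously differentiable with symmetric Jacobian $D\Xi(x)$ for every $x\in\mathbf R^n$, and let $\alpha\in(0,1)$. Then $\Xi$ is $\alpha$-averaged if and only if $\operatorname{spec}(D\Xi(x))\subset[1-2\alpha,1]$ for all $x\in\mathbf R^n$.
   Context: $\mathbf R^n$ carries the Euclidean norm $\|\cdot\|$. An operator $T$ is non-expansive if $\|T(x)-T(y)\|\le\|x-y\|$ for all $x,y$. For $\alpha\in(0,1)$, an operator $\Xi:\mathbf R^n\to\mathbf R^n$ is called $\alpha$-averaged if there exists a non-expansive $T:\mathbf R^n\to\mathbf R^n$ such that $\Xi=(1-\alpha)\mathrm{id}+\alpha T$. $\operatorname{spec}(M)$ denotes the set of eigenvalues of a matrix $M$. *)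

theory Defs
  imports "HOL-Analysis.Analysis"
begin

definition nonexpansive :: "('a::real_normed_vector \<Rightarrow> 'a) \<Rightarrow> bool" where
  "nonexpansive T \<longleftrightarrow> (\<forall>x y. norm (T x - T y) \<le> norm (x - y))"

definition averaged :: "real \<Rightarrow> ('a::real_normed_vector \<Rightarrow> 'a) \<Rightarrow> bool" where
  "averaged \<alpha> \<Xi> \<longleftrightarrow> (\<exists>T. nonexpansive T \<and> \<Xi> = (\<lambda>x. (1 - \<alpha>) *\<^sub>R x + \<alpha> *\<^sub>R T x))"

definition spec :: "real^'n^'n \<Rightarrow> complex set" where
  "spec M = {c. \<exists>v::complex^'n. v \<noteq> 0 \<and>
      (\<chi> i j. complex_of_real (M $ i $ j)) *v v = c *s v}"

end

theory Submission
  imports Defs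
begin

text \<open>\<open>\<Xi>\<close> is \<open>\<alpha>\<close>-averaged iff \<open>T = (\<Xi> - (1 - \<alpha>) id) / \<alpha>\<close> is nonexpansive. By the
  mean value inequality and its infinitesimal converse, a differentiable map is nonexpansive iff
  every derivative has operator norm at most 1, i.e. \<open>\<parallel>D\<Xi>(x) u - (1 - \<alpha>) u\<parallel> \<le> \<alpha> \<parallel>u\<parallel>\<close>.
  For a symmetric matrix \<open>A\<close> all eigenvalues are real and the operator norm of \<open>A - c I\<close> is
  the largest \<open>\<bar>\<lambda> - c\<bar>\<close> over the eigenvalues \<open>\<lambda>\<close>; with \<open>c = 1 - \<alpha>\<close> this is the
  condition \<open>spec (D\<Xi>(x)) \<subseteq> [1 - 2\<alpha>, 1]\<close>. The norm bound is obtained variationally: a unit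
  vector \<open>v\<close> maximising \<open>\<parallel>A v\<parallel>\<close> is an eigenvector of \<open>A\<^sup>2\<close>, and \<open>A v \<plusminus> \<parallel>A v\<parallel> v\<close> then yields an
  eigenvector of \<open>A\<close> with eigenvalue of modulus \<open>\<parallel>A v\<parallel>\<close>.\<close>

lemma averaged_iff_nonexpansive:
  fixes \<Xi> :: "'a::real_normed_vector \<Rightarrow> 'a"
  assumes "\<alpha> \<noteq> 0"
  shows "averaged \<alpha> \<Xi> \<longleftrightarrow> nonexpansive (\<lambda>x. (1 / \<alpha>) *\<^sub>R (\<Xi> x - (1 - \<alpha>) *\<^sub>R x))"
proof -
  have "a = (1 - \<alpha>) *\<^sub>R x + \<alpha> *\<^sub>R b \<longleftrightarrow> b = (1 / \<alpha>) *\<^sub>R (a - (1 - \<alpha>) *\<^sub>R x)" for a b x :: 'a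
    using assms by auto
  then have "\<Xi> = (\<lambda>x. (1 - \<alpha>) *\<^sub>R x + \<alpha> *\<^sub>R T x) \<longleftrightarrow>
      T = (\<lambda>x. (1 / \<alpha>) *\<^sub>R (\<Xi> x - (1 - \<alpha>) *\<^sub>R x))" for T
    by (simp add: fun_eq_iff)
  then show ?thesis
    unfolding averaged_def by simp
qed

lemma has_derivative_norm_le_lipschitz:
  fixes f :: "'a::real_normed_vector \<Rightarrow> 'b::real_normed_vector"
  assumes deriv: "(f has_derivative f') (at x)"
    and lipschitz: "\<And>y. norm (f y - f x) \<le> L * norm (y - x)"
  shows "norm (f' u) \<le> L * norm u"
proof (cases "u = 0")
  case True
  then show ?thesis
    using linear_0[OF has_derivative_linear[OF deriv]] by simp
next
  case False
  then have nu: "norm u > 0"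
    by simp
  show ?thesis
  proof (rule field_le_epsilon)
    fix e :: real
    assume "0 < e"
    then obtain d where "d > 0" and d: "\<And>y. norm (y - x) < d \<Longrightarrow>
        norm (f y - f x - f' (y - x)) \<le> (e / norm u) * norm (y - x)"
      using deriv nu unfolding has_derivative_at_alt by (meson divide_pos_pos)
    define t where "t = d / (2 * norm u)"
    have t: "t > 0" "t * norm u < d"
      using \<open>d > 0\<close> nu by (simp_all add: t_def)
    define y where "y = x + t *\<^sub>R u"
    have "f' (y - x) = t *\<^sub>R f' u"
      using linear_scale[OF has_derivative_linear[OF deriv]] by (simp add: y_def)
    then have remainder: "norm (f y - f x - t *\<^sub>R f' u) \<le> t * e"
      using d[of y] t nu by (simp add: y_def mult.commute)
    have increment: "norm (f y - f x) \<le> t * (L * norm u)"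
      using lipschitz[of y] t by (simp add: y_def mult_ac)
    have "t * norm (f' u) \<le> norm (f y - f x) + norm (f y - f x - t *\<^sub>R f' u)"
      using norm_triangle_ineq4[of "f y - f x" "f y - f x - t *\<^sub>R f' u"] t by simp
    also have "\<dots> \<le> t * (L * norm u + e)"
      using remainder increment by (simp add: distrib_left)
    finally show "norm (f' u) \<le> L * norm u + e"
      using t by simp
  qed
qed

lemma nonexpansive_iff_derivative_norm_le:
  fixes f :: "'a::real_normed_vector \<Rightarrow> 'a"
  assumes deriv: "\<And>x. (f has_derivative f' x) (at x)"
  shows "nonexpansive f \<longleftrightarrow> (\<forall>x u. norm (f' x u) \<le> norm u)"
proof
  assume "nonexpansive f"
  then show "\<forall>x u. norm (f' x u) \<le> norm u"
    using has_derivative_norm_le_lipschitz[OF deriv, of _ 1] by (simp add: nonexpansive_def)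
next
  assume "\<forall>x u. norm (f' x u) \<le> norm u"
  then have "onorm (f' x) \<le> 1" for x
    using onorm_bound[of 1 "f' x"] by simp
  then show "nonexpansive f"
    unfolding nonexpansive_def
    using differentiable_bound[OF convex_UNIV, of f f' 1] deriv by simp
qed

lemma nonpos_quadratic_imp_linear_coeff_zero:
  fixes a b :: real
  assumes "\<And>t. 2 * t * a + t\<^sup>2 * b \<le> 0"
  shows "a = 0"
proof (rule ccontr)
  assume "a \<noteq> 0"
  define K where "K = \<bar>b\<bar> + 1"
  have "K > 0"
    by (simp add: K_def add_nonneg_pos)
  have "2 * (a / K) * a + (a / K)\<^sup>2 * b \<le> 0"
    by (rule assms)
  then have "a\<^sup>2 * (2 * K + b) \<le> 0"
    using \<open>K > 0\<close> by (simp add: field_simps power2_eq_square)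
  moreover have "2 * K + b > 0"
    by (simp add: K_def)
  ultimately show False
    using \<open>a \<noteq> 0\<close> by (simp add: mult_le_0_iff)
qed

lemma linear_attains_onorm:
  fixes f :: "'a::euclidean_space \<Rightarrow> 'b::real_normed_vector"
  assumes "linear f"
  obtains v where "norm v = 1" "\<And>u. norm (f u) \<le> norm (f v) * norm u"
proof -
  have "continuous_on (sphere 0 1) (\<lambda>u. norm (f u))"
    using assms by (intro continuous_intros linear_continuous_on linear_conv_bounded_linear[THEN iffD1])
  moreover have "sphere (0::'a) 1 \<noteq> {}"
    by simp
  ultimately obtain v where v: "v \<in> sphere 0 1"
    and max: "\<And>y. y \<in> sphere 0 1 \<Longrightarrow> norm (f y) \<le> norm (f v)"
    using continuous_attains_sup[OF compact_sphere] by blast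
  have "norm (f u) \<le> norm (f v) * norm u" for u
  proof (cases "u = 0")
    case True
    then show ?thesis
      using linear_0[OF assms] by simp
  next
    case False
    then have "norm (f ((1 / norm u) *\<^sub>R u)) \<le> norm (f v)"
      by (intro max) simp
    then show ?thesis
      using False by (simp add: linear_scale[OF assms] field_simps)
  qed
  with v show ?thesis
    using that by simp
qed

lemma selfadjoint_maximiser_square_eigenvector:
  fixes f :: "'a::real_inner \<Rightarrow> 'a"
  assumes lin: "linear f"
    and selfadjoint: "\<And>u w. f u \<bullet> w = u \<bullet> f w"
    and "norm v = 1"
    and max: "\<And>u. norm (f u) \<le> norm (f v) * norm u"
  shows "f (f v) = (norm (f v))\<^sup>2 *\<^sub>R v"
proof -
  define l where "l = (norm (f v))\<^sup>2"
  have bound: "(norm (f u))\<^sup>2 \<le> l * (norm u)\<^sup>2" for u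
    using power_mono[OF max[of u], of 2] by (simp add: l_def power_mult_distrib)
  have expand: "(norm (a + t *\<^sub>R b))\<^sup>2 = (norm a)\<^sup>2 + 2 * t * (a \<bullet> b) + t\<^sup>2 * (norm b)\<^sup>2"
    for a b :: 'a and t :: real
    unfolding power2_norm_eq_inner
    by (simp add: inner_add_left inner_add_right inner_commute algebra_simps power2_eq_square)
  \<comment> \<open>First-order condition at the maximum \<open>t = 0\<close> of \<open>\<parallel>f (v + t w)\<parallel>\<^sup>2 - l \<parallel>v + t w\<parallel>\<^sup>2\<close>.\<close>
  have "f v \<bullet> f w - l * (v \<bullet> w) = 0" for w
  proof (rule nonpos_quadratic_imp_linear_coeff_zero)
    fix t :: real
    have "(norm (f v + t *\<^sub>R f w))\<^sup>2 \<le> l * (norm (v + t *\<^sub>R w))\<^sup>2"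
      using bound[of "v + t *\<^sub>R w"] by (simp add: linear_add[OF lin] linear_scale[OF lin])
    then show "2 * t * (f v \<bullet> f w - l * (v \<bullet> w)) + t\<^sup>2 * ((norm (f w))\<^sup>2 - l * (norm w)\<^sup>2) \<le> 0"
      unfolding expand using \<open>norm v = 1\<close> by (simp add: l_def algebra_simps)
  qed
  then have "f (f v) \<bullet> w = (l *\<^sub>R v) \<bullet> w" for w
    using selfadjoint[of "f v" w] by simp
  then show ?thesis
    using vector_eq_rdot l_def by blast
qed

lemma square_eigenvector_imp_eigenvector:
  fixes f :: "'a::real_vector \<Rightarrow> 'a"
  assumes "linear f" and "v \<noteq> 0" and "f (f v) = (m * m) *\<^sub>R v"
  obtains u \<mu> where "u \<noteq> 0" "f u = \<mu> *\<^sub>R u" "\<bar>\<mu>\<bar> = \<bar>m\<bar>"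
proof (cases "f v + m *\<^sub>R v = 0")
  case True
  then have "f v = (- m) *\<^sub>R v"
    by (simp add: eq_neg_iff_add_eq_0)
  with \<open>v \<noteq> 0\<close> that show ?thesis
    by fastforce
next
  case False
  have "f (f v + m *\<^sub>R v) = m *\<^sub>R (f v + m *\<^sub>R v)"
    using assms by (simp add: linear_add linear_scale algebra_simps)
  with False that show ?thesis
    by blast
qed

lemma selfadjoint_norm_le_eigenvalue_bound:
  fixes f :: "'a::euclidean_space \<Rightarrow> 'a"
  assumes lin: "linear f"
    and selfadjoint: "\<And>u w. f u \<bullet> w = u \<bullet> f w"
    and eigenvalues: "\<And>u \<mu>. u \<noteq> 0 \<Longrightarrow> f u = \<mu> *\<^sub>R u \<Longrightarrow> \<bar>\<mu>\<bar> \<le> a"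
  shows "norm (f u) \<le> a * norm u"
proof -
  obtain v where "norm v = 1" and max: "\<And>u. norm (f u) \<le> norm (f v) * norm u"
    using linear_attains_onorm[OF lin] by blast
  then have "f (f v) = (norm (f v) * norm (f v)) *\<^sub>R v"
    using selfadjoint_maximiser_square_eigenvector[OF lin selfadjoint] by (simp add: power2_eq_square)
  moreover have "v \<noteq> 0"
    using \<open>norm v = 1\<close> by auto
  ultimately obtain w \<mu> where "w \<noteq> 0" "f w = \<mu> *\<^sub>R w" "\<bar>\<mu>\<bar> = norm (f v)"
    using square_eigenvector_imp_eigenvector[OF lin] by (metis abs_norm_cancel)
  then have "norm (f v) \<le> a"
    using eigenvalues by metis
  then show ?thesis
    using max[of u] mult_right_mono[of "norm (f v)" a "norm u"] by simp
qed

lemma symmetric_matrix_inner_commute: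
  fixes A :: "real^'n^'n"
  assumes "transpose A = A"
  shows "(A *v u) \<bullet> w = u \<bullet> (A *v w)"
  by (metis assms dot_lmul_matrix inner_commute transpose_matrix_vector)

lemma real_eigenvalue_in_spec:
  fixes A :: "real^'n^'n"
  assumes "u \<noteq> 0" and "A *v u = r *\<^sub>R u"
  shows "complex_of_real r \<in> spec A"
proof -
  define v :: "complex^'n" where "v = (\<chi> i. complex_of_real (u $ i))"
  have "v \<noteq> 0"
    using assms(1) by (auto simp: v_def vec_eq_iff)
  moreover have "(\<Sum>j\<in>UNIV. A $ i $ j * u $ j) = r * u $ i" for i
    using arg_cong[OF assms(2), of "\<lambda>x. x $ i"] by (simp add: matrix_vector_mult_def)
  then have "(\<chi> i j. complex_of_real (A $ i $ j)) *v v = complex_of_real r *s v"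
    unfolding v_def matrix_vector_mult_def vec_eq_iff
    by (simp flip: of_real_mult of_real_sum)
  ultimately show ?thesis
    unfolding spec_def by blast
qed

lemma complexified_eigenvector_Re_Im:
  fixes A :: "real^'n^'n" and v :: "complex^'n"
  assumes "(\<chi> i j. complex_of_real (A $ i $ j)) *v v = c *s v"
  defines "x \<equiv> \<chi> i. Re (v $ i)" and "y \<equiv> \<chi> i. Im (v $ i)"
  shows "A *v x = Re c *\<^sub>R x - Im c *\<^sub>R y" and "A *v y = Re c *\<^sub>R y + Im c *\<^sub>R x"
proof -
  have components: "(\<Sum>j\<in>UNIV. complex_of_real (A $ i $ j) * v $ j) = c * v $ i" for i
    using arg_cong[OF assms(1), of "\<lambda>x. x $ i"] by (simp add: matrix_vector_mult_def)
  show "A *v x = Re c *\<^sub>R x - Im c *\<^sub>R y"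
    using arg_cong[OF components, of Re]
    by (simp add: vec_eq_iff matrix_vector_mult_def x_def y_def Re_sum)
  show "A *v y = Re c *\<^sub>R y + Im c *\<^sub>R x"
    using arg_cong[OF components, of Im]
    by (simp add: vec_eq_iff matrix_vector_mult_def x_def y_def Im_sum)
qed

lemma spec_symmetric_matrix:
  fixes A :: "real^'n^'n"
  assumes sym: "transpose A = A"
  shows "spec A = complex_of_real ` {r. \<exists>u. u \<noteq> 0 \<and> A *v u = r *\<^sub>R u}"
proof
  show "complex_of_real ` {r. \<exists>u. u \<noteq> 0 \<and> A *v u = r *\<^sub>R u} \<subseteq> spec A"
    using real_eigenvalue_in_spec by blast
  show "spec A \<subseteq> complex_of_real ` {r. \<exists>u. u \<noteq> 0 \<and> A *v u = r *\<^sub>R u}"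
  proof
    fix c
    assume "c \<in> spec A"
    then obtain v :: "complex^'n" where "v \<noteq> 0"
      and eigen: "(\<chi> i j. complex_of_real (A $ i $ j)) *v v = c *s v"
      unfolding spec_def by blast
    define x where "x = (\<chi> i. Re (v $ i))"
    define y where "y = (\<chi> i. Im (v $ i))"
    note Ax = complexified_eigenvector_Re_Im(1)[OF eigen, folded x_def y_def]
     and Ay = complexified_eigenvector_Re_Im(2)[OF eigen, folded x_def y_def]
    have "x \<noteq> 0 \<or> y \<noteq> 0"
      using \<open>v \<noteq> 0\<close> by (auto simp: x_def y_def vec_eq_iff complex_eq_iff)
    then have "x \<bullet> x + y \<bullet> y > 0"
      by (metis add_nonneg_pos add_pos_nonneg inner_ge_zero inner_gt_zero_iff)
    moreover have "Im c * (x \<bullet> x + y \<bullet> y) = 0"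
      using symmetric_matrix_inner_commute[OF sym, of x y] unfolding Ax Ay
      by (simp add: inner_diff_left inner_add_right inner_commute algebra_simps)
    ultimately have "Im c = 0"
      by simp
    then have "c = complex_of_real (Re c)"
      by (simp add: complex_eq_iff)
    moreover have "\<exists>u. u \<noteq> 0 \<and> A *v u = Re c *\<^sub>R u"
      using Ax Ay \<open>Im c = 0\<close> \<open>x \<noteq> 0 \<or> y \<noteq> 0\<close> by auto
    ultimately show "c \<in> complex_of_real ` {r. \<exists>u. u \<noteq> 0 \<and> A *v u = r *\<^sub>R u}"
      by blast
  qed
qed

lemma symmetric_matrix_spec_subset_iff:
  fixes A :: "real^'n^'n"
  assumes sym: "transpose A = A"
  shows "spec A \<subseteq> complex_of_real ` {c - r .. c + r} \<longleftrightarrow>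
    (\<forall>u. norm (A *v u - c *\<^sub>R u) \<le> r * norm u)"
proof
  assume spec: "spec A \<subseteq> complex_of_real ` {c - r .. c + r}"
  show "\<forall>u. norm (A *v u - c *\<^sub>R u) \<le> r * norm u"
  proof (intro allI selfadjoint_norm_le_eigenvalue_bound)
    show "linear (\<lambda>u. A *v u - c *\<^sub>R u)"
      by (intro linear_compose_sub matrix_vector_mul_linear linear_scale_self)
    show "(A *v u - c *\<^sub>R u) \<bullet> w = u \<bullet> (A *v w - c *\<^sub>R w)" for u w
      using symmetric_matrix_inner_commute[OF sym] by (simp add: inner_diff_left inner_diff_right)
    show "\<bar>\<mu>\<bar> \<le> r" if "u \<noteq> 0" and "A *v u - c *\<^sub>R u = \<mu> *\<^sub>R u" for u \<mu>
    proof -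
      have "A *v u = (c + \<mu>) *\<^sub>R u"
        using that(2) by (simp add: algebra_simps)
      then have "complex_of_real (c + \<mu>) \<in> complex_of_real ` {c - r .. c + r}"
        using real_eigenvalue_in_spec[OF that(1)] spec by blast
      then show ?thesis
        by (auto simp del: of_real_add)
    qed
  qed
next
  assume norm: "\<forall>u. norm (A *v u - c *\<^sub>R u) \<le> r * norm u"
  show "spec A \<subseteq> complex_of_real ` {c - r .. c + r}"
  proof
    fix z
    assume "z \<in> spec A"
    then obtain u \<mu> where "u \<noteq> 0" "A *v u = \<mu> *\<^sub>R u" "z = complex_of_real \<mu>"
      by (auto simp: spec_symmetric_matrix[OF sym])
    then have "\<bar>\<mu> - c\<bar> * norm u \<le> r * norm u"
      using norm by (metis norm_scaleR scaleR_diff_left)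
    then have "\<mu> \<in> {c - r .. c + r}"
      using \<open>u \<noteq> 0\<close> by auto
    then show "z \<in> complex_of_real ` {c - r .. c + r}"
      using \<open>z = complex_of_real \<mu>\<close> by blast
  qed
qed

theorem mainTheorem2:
  fixes \<Xi> :: "real^'n \<Rightarrow> real^'n"
    and \<Xi>' :: "real^'n \<Rightarrow> real^'n \<Rightarrow> real^'n"
    and \<alpha> :: real
  assumes deriv: "\<And>x. (\<Xi> has_derivative \<Xi>' x) (at x)"
    and cont: "continuous_on UNIV (\<lambda>x. matrix (\<Xi>' x))"
    and symm: "\<And>x. transpose (matrix (\<Xi>' x)) = matrix (\<Xi>' x)"
    and alpha: "0 < \<alpha>" "\<alpha> < 1"
  shows "averaged \<alpha> \<Xi> \<longleftrightarrow>
         (\<forall>x. spec (matrix (\<Xi>' x)) \<subseteq> complex_of_real ` {1 - 2 * \<alpha> .. 1})"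
proof -
  have matrix_apply: "matrix (\<Xi>' x) *v u = \<Xi>' x u" for x u
    using has_derivative_linear[OF deriv] matrix_works linear_matrix_vector_mul_eq by metis
  have "averaged \<alpha> \<Xi> \<longleftrightarrow> nonexpansive (\<lambda>y. (1 / \<alpha>) *\<^sub>R (\<Xi> y - (1 - \<alpha>) *\<^sub>R y))"
    using alpha by (simp add: averaged_iff_nonexpansive)
  also have "\<dots> \<longleftrightarrow> (\<forall>x u. norm ((1 / \<alpha>) *\<^sub>R (\<Xi>' x u - (1 - \<alpha>) *\<^sub>R u)) \<le> norm u)"
    by (rule nonexpansive_iff_derivative_norm_le) (intro derivative_intros deriv)
  also have "\<dots> \<longleftrightarrow> (\<forall>x u. norm (matrix (\<Xi>' x) *v u - (1 - \<alpha>) *\<^sub>R u) \<le> \<alpha> * norm u)"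
    using alpha by (simp add: matrix_apply divide_le_eq mult.commute)
  also have "\<dots> \<longleftrightarrow> (\<forall>x. spec (matrix (\<Xi>' x)) \<subseteq> complex_of_real ` {(1 - \<alpha>) - \<alpha> .. (1 - \<alpha>) + \<alpha>})"
    using symmetric_matrix_spec_subset_iff[OF symm] by blast
  finally show ?thesis
    by simp
qed

end
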